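(* Let $\mathcal S\in\Sigma^n$ be a string over an integer alphabet $\Sigma$ and let $\pi:[n]\to[n]$ be an order-preserving permutation for $\mathcal S$. Then $\mathcal S$ can be compressed in $O(|\mathrm{PDA}_\pi|\log n)$ bits of space, i.e., there is a representation of $\mathcal S$ of $O(|\mathrm{PDA}_\pi|\log n)$ bits from which $\mathcal S$ can be reconstructed.
   Context: For a string $\mathcal S$ of length $n$ and $i\neq j$, $\mathrm{rlce}(i,j)$ denotes the length of the longest common prefix of $\mathcal S[i,n]$ and $\mathcal S[j,n]$. A permutation $\pi:[n]\to[n]$ is order-preserving for $\mathcal S$ if for all $i,j\in[n-1]$, $\pi(i)<\pi(j)$ and $\mathcal S[i,i+1]=\mathcal S[j,j+1]$ imply $\pi(i+1)<\pi(j+1)$. The generalized longest previous factor array is $\mathrm{LPF}_\pi[i]=0$ if $\pi(i)=1$ and $\mathrm{LPF}_\pi[i]=\max_{\pi(j)<\pi(i)}\mathrm{rlce}(j,i)$ otherwise. The path decomposition array $\mathrm{PDA}_\pi$ is the set $\{i+\mathrm{LPF}_\pi[i]: i\in[n]\}$ (without duplicates) sorted by the colexicographic order of the prefixes $\mathcal S[1,j]$; $|\mathrm{PDA}_\pi|$ is its number of elements. *)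

theory Defs
  imports Complex_Main
begin

(* Strings are lists of naturals (integer alphabet); positions are 1-based:
   position i of S (1 <= i <= length S) is S ! (i - 1). *)

fun lcp :: "'a list \<Rightarrow> 'a list \<Rightarrow> nat" where
  "lcp (x # xs) (y # ys) = (if x = y then Suc (lcp xs ys) else 0)"
| "lcp _ _ = 0"

definition rlce :: "'a list \<Rightarrow> nat \<Rightarrow> nat \<Rightarrow> nat" where
  "rlce S i j = lcp (drop (i - 1) S) (drop (j - 1) S)"

definition chr :: "'a list \<Rightarrow> nat \<Rightarrow> 'a" where
  "chr S i = S ! (i - 1)"

definition order_preserving :: "'a list \<Rightarrow> (nat \<Rightarrow> nat) \<Rightarrow> bool" where
  "order_preserving S \<pi> \<longleftrightarrow>
     bij_betw \<pi> {1..length S} {1..length S} \<and>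
     (\<forall>i\<in>{1..length S - 1}. \<forall>j\<in>{1..length S - 1}.
        \<pi> i < \<pi> j \<and> chr S i = chr S j \<and> chr S (i+1) = chr S (j+1)
        \<longrightarrow> \<pi> (i+1) < \<pi> (j+1))"

definition LPF :: "'a list \<Rightarrow> (nat \<Rightarrow> nat) \<Rightarrow> nat \<Rightarrow> nat" where
  "LPF S \<pi> i = (if \<pi> i = 1 then 0
      else Max {rlce S j i | j. j \<in> {1..length S} \<and> \<pi> j < \<pi> i})"

(* The set of entries of PDA_pi; its ordering is irrelevant for |PDA_pi| *)
definition PDA_set :: "'a list \<Rightarrow> (nat \<Rightarrow> nat) \<Rightarrow> nat set" where
  "PDA_set S \<pi> = {i + LPF S \<pi> i | i. i \<in> {1..length S}}"

end

theory Submission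
  imports Defs "HOL-Library.Log_Nat" "HOL-Library.More_List"
begin

(* Parse S greedily from the left, LZ77-style but guided by \<pi>: at position i copy
   LPF_\<pi>[i] characters from a position j with \<pi> j < \<pi> i at which they agree, then write
   one literal character.  The phrase starting at i ends at i + LPF_\<pi>[i], an element of
   PDA_\<pi>, and the next phrase starts after it, so there are at most |PDA_\<pi>| phrases, each
   stored as three numbers of O(log n) bits.  The phrases determine S: order preservation
   propagates \<pi> j < \<pi> i along the whole copied block, so every copied character is read
   from a position of smaller \<pi>-rank, and S is recovered by induction on the rank. *)

section \<open>Self-delimiting binary codes\<close>

definition binary :: "nat \<Rightarrow> bool list" where
  "binary x = map (bit x) [0..<floorlog 2 x]"

lemma horner_sum_binary: "horner_sum of_bool 2 (binary x) = x"
proof (cases "x = 0")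
  case False
  then have "x < 2 ^ floorlog 2 x" by (simp add: floorlog_bounds)
  then show ?thesis by (simp add: binary_def horner_sum_bit_eq_take_bit take_bit_nat_eq_self)
qed (simp add: binary_def floorlog_def)

definition enc_nat :: "nat \<Rightarrow> bool list" where
  "enc_nat x = concat (map (\<lambda>b. [True, b]) (binary x)) @ [False]"

definition enc_nats :: "nat list \<Rightarrow> bool list" where
  "enc_nats xs = concat (map enc_nat xs)"

fun split_blocks :: "bool list \<Rightarrow> bool list \<Rightarrow> bool list list" where
  "split_blocks acc (True # b # r) = split_blocks (acc @ [b]) r"
| "split_blocks acc (False # r) = acc # split_blocks [] r"
| "split_blocks acc _ = []"

lemma split_blocks_interleaved:
  "split_blocks acc (concat (map (\<lambda>b. [True, b]) bs) @ r) = split_blocks (acc @ bs) r"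
  by (induction bs arbitrary: acc) auto

lemma split_blocks_enc_nats: "split_blocks [] (enc_nats xs) = map binary xs"
  by (induction xs) (auto simp: enc_nats_def enc_nat_def split_blocks_interleaved)

lemma inj_enc_nats: "inj enc_nats"
proof (rule injI)
  fix xs ys assume "enc_nats xs = enc_nats ys"
  then have "map (horner_sum of_bool (2::nat)) (split_blocks [] (enc_nats xs))
           = map (horner_sum of_bool 2) (split_blocks [] (enc_nats ys))" by simp
  then show "xs = ys" by (simp add: split_blocks_enc_nats comp_def horner_sum_binary)
qed

lemma length_enc_nats_le:
  assumes "\<forall>x\<in>set xs. x \<le> B"
  shows "length (enc_nats xs) \<le> length xs * (2 * floorlog 2 B + 1)"
  using assms
proof (induction xs)
  case (Cons x xs)
  have "length (enc_nat x) = 2 * floorlog 2 x + 1"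
    by (simp add: enc_nat_def binary_def length_concat comp_def sum_list_triv)
  also have "\<dots> \<le> 2 * floorlog 2 B + 1" using Cons.prems by (simp add: floorlog_mono)
  finally show ?case using Cons by (simp add: enc_nats_def)
qed (simp add: enc_nats_def)

lemma floorlog_le_log: "0 < x \<Longrightarrow> real (floorlog 2 x) \<le> log 2 (real x) + 1"
  by (simp add: floorlog_def)

section \<open>Common extensions and the LPF array\<close>

lemma lcp_nth: "m < lcp xs ys \<Longrightarrow> m < length xs \<and> m < length ys \<and> xs ! m = ys ! m"
  by (induction xs ys arbitrary: m rule: lcp.induct)
    (auto split: if_splits simp: less_Suc_eq_0_disj)

lemma lcp_le_length: "lcp xs ys \<le> length ys"
  by (induction xs ys rule: lcp.induct) auto

lemma rlce_le: "rlce S j i \<le> length S + 1 - i"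
  using lcp_le_length[of "drop (j - 1) S" "drop (i - 1) S"] by (simp add: rlce_def)

lemma less_rlce_chr:
  assumes "m < rlce S j i" "1 \<le> j" "1 \<le> i"
  shows "j + m \<le> length S \<and> i + m \<le> length S \<and> chr S (j + m) = chr S (i + m)"
  using lcp_nth[of m "drop (j - 1) S" "drop (i - 1) S"] assms
  by (auto simp: rlce_def chr_def add.commute)

lemma order_preserving_bij: "order_preserving S \<pi> \<Longrightarrow> bij_betw \<pi> {1..length S} {1..length S}"
  by (simp add: order_preserving_def)

lemma order_preserving_step:
  assumes "order_preserving S \<pi>" "i \<in> {1..length S - 1}" "j \<in> {1..length S - 1}"
    "\<pi> i < \<pi> j" "chr S i = chr S j" "chr S (i + 1) = chr S (j + 1)"
  shows "\<pi> (i + 1) < \<pi> (j + 1)"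
  using assms by (simp add: order_preserving_def)

lemma order_preserving_less_rlce:
  assumes op: "order_preserving S \<pi>" and "1 \<le> j" "1 \<le> i" "\<pi> j < \<pi> i"
    and "m < rlce S j i"
  shows "\<pi> (j + m) < \<pi> (i + m)"
  using \<open>m < rlce S j i\<close>
proof (induction m)
  case (Suc m)
  have "\<pi> (j + m + 1) < \<pi> (i + m + 1)"
  proof (rule order_preserving_step[OF op])
    show "\<pi> (j + m) < \<pi> (i + m)" using Suc by simp
    show "chr S (j + m) = chr S (i + m)" "chr S (j + m + 1) = chr S (i + m + 1)"
      using less_rlce_chr[of m S j i] less_rlce_chr[of "Suc m" S j i] Suc.prems assms(2,3)
      by auto
    show "j + m \<in> {1..length S - 1}" "i + m \<in> {1..length S - 1}"
      using less_rlce_chr[of "Suc m" S j i] Suc.prems assms(2,3) by auto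
  qed
  then show ?case by simp
qed (use assms in simp)

lemma LPF_attained:
  assumes op: "order_preserving S \<pi>" and i: "i \<in> {1..length S}" and "\<pi> i \<noteq> 1"
  shows "\<exists>j\<in>{1..length S}. \<pi> j < \<pi> i \<and> rlce S j i = LPF S \<pi> i"
proof -
  define J where "J = {j \<in> {1..length S}. \<pi> j < \<pi> i}"
  have "1 \<in> \<pi> ` {1..length S}" "\<pi> i \<in> {1..length S}"
    using order_preserving_bij[OF op] i by (auto simp: bij_betw_def)
  then have "J \<noteq> {}" using \<open>\<pi> i \<noteq> 1\<close> by (force simp: J_def)
  moreover have "finite J" by (simp add: J_def)
  ultimately have "Max ((\<lambda>j. rlce S j i) ` J) \<in> (\<lambda>j. rlce S j i) ` J" by simp
  moreover have "LPF S \<pi> i = Max ((\<lambda>j. rlce S j i) ` J)"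
    using \<open>\<pi> i \<noteq> 1\<close> by (simp add: LPF_def J_def image_def conj_commute)
  ultimately show ?thesis by (auto simp: J_def)
qed

lemma LPF_le:
  assumes "order_preserving S \<pi>" "i \<in> {1..length S}"
  shows "i + LPF S \<pi> i \<le> length S + 1"
proof (cases "\<pi> i = 1")
  case False
  then obtain j where "rlce S j i = LPF S \<pi> i" using LPF_attained[OF assms] by blast
  then show ?thesis using rlce_le[of S j i] assms(2) by auto
qed (use assms(2) in \<open>simp add: LPF_def\<close>)

section \<open>The phrase decomposition\<close>

definition copy_source :: "nat list \<Rightarrow> (nat \<Rightarrow> nat) \<Rightarrow> nat \<Rightarrow> nat" where
  "copy_source S \<pi> i = (if LPF S \<pi> i = 0 then 0
     else SOME j. j \<in> {1..length S} \<and> \<pi> j < \<pi> i \<and> rlce S j i = LPF S \<pi> i)"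

lemma copy_source:
  assumes "order_preserving S \<pi>" "i \<in> {1..length S}" "0 < LPF S \<pi> i"
  shows "copy_source S \<pi> i \<in> {1..length S} \<and> \<pi> (copy_source S \<pi> i) < \<pi> i
    \<and> rlce S (copy_source S \<pi> i) i = LPF S \<pi> i"
proof -
  have "\<pi> i \<noteq> 1" using assms(3) by (auto simp: LPF_def)
  then show ?thesis
    using LPF_attained[OF assms(1,2)] assms(3) unfolding copy_source_def
    by (simp add: Bex_def) (rule someI_ex)
qed

lemma copy_source_le:
  assumes "order_preserving S \<pi>" "i \<in> {1..length S}"
  shows "copy_source S \<pi> i \<le> length S"
  using copy_source[OF assms] by (cases "LPF S \<pi> i = 0") (auto simp: copy_source_def)

text \<open>The phrase starting at position \<open>i\<close> copies \<open>LPF S \<pi> i\<close> characters from its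
  copy source and then spells out one literal character, as in LZ77; the literal is the dummy
  \<open>0\<close> when the copy already reaches the end of \<open>S\<close>.\<close>

definition phrase :: "nat list \<Rightarrow> (nat \<Rightarrow> nat) \<Rightarrow> nat \<Rightarrow> nat \<times> nat \<times> nat" where
  "phrase S \<pi> i = (LPF S \<pi> i, copy_source S \<pi> i, nth_default 0 S (i + LPF S \<pi> i - 1))"

function lz_parse :: "nat list \<Rightarrow> (nat \<Rightarrow> nat) \<Rightarrow> nat \<Rightarrow> (nat \<times> nat \<times> nat) list" where
  "lz_parse S \<pi> i = (if i = 0 \<or> length S < i then []
     else phrase S \<pi> i # lz_parse S \<pi> (i + LPF S \<pi> i + 1))"
  by pat_completeness auto
termination by (relation "measure (\<lambda>(S, \<pi>, i). Suc (length S) - i)") auto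

declare lz_parse.simps [simp del]

fun phrase_lookup :: "nat \<Rightarrow> (nat \<times> nat \<times> nat) list \<Rightarrow> nat \<Rightarrow> nat + nat" where
  "phrase_lookup s [] q = Inl 0"
| "phrase_lookup s ((L, j, c) # ps) q =
     (if q < s + L then Inr (j + (q - s)) else if q = s + L then Inl c
      else phrase_lookup (s + L + 1) ps q)"

lemma phrase_lookup_lz_parse:
  "order_preserving S \<pi> \<Longrightarrow> 1 \<le> i \<Longrightarrow> i \<le> q \<Longrightarrow> q \<le> length S \<Longrightarrow>
    (case phrase_lookup i (lz_parse S \<pi> i) q of
       Inl c \<Rightarrow> chr S q = c
     | Inr j \<Rightarrow> j \<in> {1..length S} \<and> chr S j = chr S q \<and> \<pi> j < \<pi> q)"
proof (induction S \<pi> i rule: lz_parse.induct)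
  case (1 S \<pi> i)
  define L where "L = LPF S \<pi> i"
  have i: "i \<in> {1..length S}" using "1.prems" by auto
  have parse: "lz_parse S \<pi> i = phrase S \<pi> i # lz_parse S \<pi> (i + L + 1)"
    using i by (subst lz_parse.simps) (simp add: L_def)
  consider (copied) "q < i + L" | (literal) "q = i + L" | (later) "i + L < q" by linarith
  then show ?case
  proof cases
    case copied
    define j where "j = copy_source S \<pi> i"
    have j: "j \<in> {1..length S}" "\<pi> j < \<pi> i" "q - i < rlce S j i"
      using copy_source[OF "1.prems"(1) i] copied "1.prems" unfolding j_def L_def by auto
    have "j + (q - i) \<le> length S" "chr S (j + (q - i)) = chr S q"
      using less_rlce_chr[OF j(3)] j(1) "1.prems" by auto
    moreover have "\<pi> (j + (q - i)) < \<pi> q"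
      using order_preserving_less_rlce[OF "1.prems"(1) _ _ j(2,3)] j(1) "1.prems" by auto
    ultimately show ?thesis using copied j(1) by (simp add: parse phrase_def j_def L_def)
  next
    case literal
    then show ?thesis
      using "1.prems" by (simp add: parse phrase_def L_def nth_default_nth chr_def)
  next
    case later
    then show ?thesis using "1.IH" i "1.prems" by (simp add: parse phrase_def L_def)
  qed
qed

lemma lz_parse_determines_string:
  assumes op: "order_preserving S \<pi>" and op': "order_preserving S' \<pi>'"
    and len: "length S = length S'" and parse: "lz_parse S \<pi> 1 = lz_parse S' \<pi>' 1"
  shows "S = S'"
proof -
  have chr: "chr S q = chr S' q" if "q \<in> {1..length S}" for q
    using that
  proof (induction "\<pi> q" arbitrary: q rule: less_induct)
    case less
    note lookup = phrase_lookup_lz_parse[OF op, of 1 q] phrase_lookup_lz_parse[OF op', of 1 q]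
    show ?case
    proof (cases "phrase_lookup 1 (lz_parse S \<pi> 1) q")
      case (Inl c)
      then show ?thesis using lookup less.prems len parse by simp
    next
      case (Inr j)
      then have "j \<in> {1..length S}" "\<pi> j < \<pi> q" "chr S j = chr S q" "chr S' j = chr S' q"
        using lookup less.prems len parse by auto
      then show ?thesis using less.hyps by metis
    qed
  qed
  show ?thesis
  proof (rule nth_equalityI)
    fix q assume "q < length S"
    then show "S ! q = S' ! q" using chr[of "Suc q"] by (simp add: chr_def)
  qed (rule len)
qed

section \<open>Size of the code\<close>

lemma PDA_set_eq_image: "PDA_set S \<pi> = (\<lambda>i. i + LPF S \<pi> i) ` {1..length S}"
  by (auto simp: PDA_set_def)

lemma finite_PDA_set: "finite (PDA_set S \<pi>)"
  by (simp add: PDA_set_eq_image)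

text \<open>Each phrase ends at the element \<open>i + LPF S \<pi> i\<close> of \<open>PDA_set S \<pi>\<close>, and the next
  phrase starts beyond it.\<close>

lemma length_lz_parse_le: "length (lz_parse S \<pi> i) \<le> card (PDA_set S \<pi> \<inter> {i..})"
proof (induction S \<pi> i rule: lz_parse.induct)
  case (1 S \<pi> i)
  show ?case
  proof (cases "i = 0 \<or> length S < i")
    case False
    define P where "P = PDA_set S \<pi>"
    define e where "e = i + LPF S \<pi> i"
    have "finite P" by (simp add: P_def finite_PDA_set)
    have "card (P \<inter> {e + 1..}) \<le> card (P \<inter> {i..} - {e})"
      using \<open>finite P\<close> by (intro card_mono) (auto simp: e_def)
    also have "\<dots> < card (P \<inter> {i..})"
      using \<open>finite P\<close> False by (intro card_Diff1_less) (auto simp: P_def e_def PDA_set_eq_image)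
    finally show ?thesis
      using "1.IH" False by (subst lz_parse.simps) (simp add: P_def e_def)
  qed (simp add: lz_parse.simps)
qed

lemma lz_parse_subset_phrases: "set (lz_parse S \<pi> i) \<subseteq> phrase S \<pi> ` {1..length S}"
proof (induction S \<pi> i rule: lz_parse.induct)
  case (1 S \<pi> i)
  then show ?case by (subst lz_parse.simps) simp
qed

lemma phrase_entries:
  assumes "order_preserving S \<pi>" "i \<in> {1..length S}" "phrase S \<pi> i = (L, j, c)"
  shows "L \<le> length S \<and> j \<le> length S \<and> (c = 0 \<or> c \<in> set S)"
  using LPF_le[OF assms(1,2)] copy_source_le[OF assms(1,2)] assms(2,3)
  by (auto simp: phrase_def nth_default_def)

definition lz_code :: "nat list \<Rightarrow> (nat \<Rightarrow> nat) \<Rightarrow> nat list" where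
  "lz_code S \<pi> = length S # concat (map (\<lambda>(L, j, c). [L, j, c]) (lz_parse S \<pi> 1))"

lemma inj_concat_triples: "inj (\<lambda>ts. concat (map (\<lambda>(a::'a, b::'a, c::'a). [a, b, c]) ts))"
proof (rule injI)
  fix ts us :: "('a \<times> 'a \<times> 'a) list"
  show "concat (map (\<lambda>(a, b, c). [a, b, c]) ts) = concat (map (\<lambda>(a, b, c). [a, b, c]) us)
    \<Longrightarrow> ts = us"
  proof (induction ts arbitrary: us)
    case Nil
    then show ?case by (cases us) auto
  next
    case (Cons t ts)
    then show ?case by (cases us) (auto split: prod.splits)
  qed
qed

lemma lz_code_determines_string:
  assumes "order_preserving S \<pi>" "order_preserving S' \<pi>'" "lz_code S \<pi> = lz_code S' \<pi>'"
  shows "S = S'"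
proof (rule lz_parse_determines_string[OF assms(1,2)])
  show "length S = length S'" using assms(3) by (simp add: lz_code_def)
  show "lz_parse S \<pi> 1 = lz_parse S' \<pi>' 1"
    using assms(3) by (intro injD[OF inj_concat_triples]) (simp add: lz_code_def)
qed

lemma length_concat_triples:
  "length (concat (map (\<lambda>(a, b, c). [a, b, c]) ts)) = 3 * length ts"
  by (induction ts) auto

lemma length_lz_code: "length (lz_code S \<pi>) = 3 * length (lz_parse S \<pi> 1) + 1"
  by (simp add: lz_code_def length_concat_triples)

lemma lz_code_entries:
  assumes op: "order_preserving S \<pi>" and x: "x \<in> set (lz_code S \<pi>)"
  shows "x \<le> length S \<or> x \<in> set S"
proof -
  consider "x = length S" | t where "t \<in> set (lz_parse S \<pi> 1)" "x \<in> set ((\<lambda>(L, j, c). [L, j, c]) t)"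
    using x by (auto simp: lz_code_def)
  then show ?thesis
  proof cases
    case (2 t)
    then obtain i where i: "i \<in> {1..length S}" "t = phrase S \<pi> i"
      using lz_parse_subset_phrases by blast
    obtain L j c where "phrase S \<pi> i = (L, j, c)" by (cases "phrase S \<pi> i")
    then show ?thesis using phrase_entries[OF op i(1)] i(2) 2(2) by auto
  qed simp
qed

text \<open>A choice-based decoder suffices: by \<open>lz_code_determines_string\<close> the choice is
  forced on every code word.\<close>

definition lz_decode :: "bool list \<Rightarrow> nat list" where
  "lz_decode b = (SOME S. \<exists>\<pi>. order_preserving S \<pi> \<and> enc_nats (lz_code S \<pi>) = b)"

lemma lz_decode_enc_nats_lz_code:
  assumes "order_preserving S \<pi>"
  shows "lz_decode (enc_nats (lz_code S \<pi>)) = S"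
proof -
  define b where "b = enc_nats (lz_code S \<pi>)"
  have "\<exists>S \<pi>. order_preserving S \<pi> \<and> enc_nats (lz_code S \<pi>) = b"
    using assms b_def by blast
  then have "\<exists>\<pi>'. order_preserving (lz_decode b) \<pi>' \<and> enc_nats (lz_code (lz_decode b) \<pi>') = b"
    unfolding lz_decode_def by (rule someI_ex)
  then obtain \<pi>' where "order_preserving (lz_decode b) \<pi>'" "enc_nats (lz_code (lz_decode b) \<pi>') = b"
    by blast
  then show ?thesis
    using assms lz_code_determines_string inj_enc_nats by (metis b_def injD)
qed

lemma length_lz_code_le:
  assumes "1 \<le> length S"
  shows "length (lz_code S \<pi>) \<le> 4 * card (PDA_set S \<pi>)"
proof -
  have "1 + LPF S \<pi> 1 \<in> PDA_set S \<pi>" using assms unfolding PDA_set_eq_image by (intro imageI) simp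
  then have "1 \<le> card (PDA_set S \<pi>)" using finite_PDA_set by (auto simp: Suc_le_eq card_gt_0_iff)
  moreover have "card (PDA_set S \<pi> \<inter> {1..}) \<le> card (PDA_set S \<pi>)"
    by (rule card_mono[OF finite_PDA_set]) blast
  ultimately show ?thesis using length_lz_parse_le[of S \<pi> 1] by (simp add: length_lz_code)
qed

lemma lz_code_entries_le_power:
  assumes "order_preserving S \<pi>" "1 \<le> length S" "\<forall>x\<in>set S. x < length S ^ k"
    and "x \<in> set (lz_code S \<pi>)"
  shows "x \<le> length S ^ (k + 1)"
proof -
  have "x \<le> length S \<or> x < length S ^ k" using lz_code_entries[OF assms(1,4)] assms(3) by auto
  moreover have "length S \<le> length S ^ (k + 1)" "length S ^ k \<le> length S ^ (k + 1)"
    using assms(2) by simp_all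
  ultimately show ?thesis by linarith
qed

lemma binary_width_power_le_log:
  assumes "2 \<le> n"
  shows "real (2 * floorlog 2 (n ^ (k + 1)) + 1) \<le> (2 * real k + 5) * log 2 n"
proof -
  have "real (floorlog 2 (n ^ (k + 1))) \<le> log 2 (real n ^ (k + 1)) + 1"
    using floorlog_le_log[of "n ^ (k + 1)"] assms by (simp only: of_nat_power) simp
  also have "\<dots> = (k + 1) * log 2 n + 1" by (simp only: log_nat_power of_nat_0_le_iff)
  finally have "real (floorlog 2 (n ^ (k + 1))) \<le> (k + 1) * log 2 n + 1" .
  moreover have "1 \<le> log 2 n" using le_log2_of_power[of 1 n] assms by simp
  ultimately show ?thesis by (simp add: algebra_simps)
qed

lemma length_enc_lz_code_le:
  assumes "order_preserving S \<pi>" "2 \<le> length S" "\<forall>x\<in>set S. x < length S ^ k"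
  shows "real (length (enc_nats (lz_code S \<pi>)))
    \<le> 4 * (2 * real k + 5) * real (card (PDA_set S \<pi>)) * log 2 (real (length S))"
proof -
  define p where "p = card (PDA_set S \<pi>)"
  define w where "w = 2 * floorlog 2 (length S ^ (k + 1)) + 1"
  have "length (enc_nats (lz_code S \<pi>)) \<le> length (lz_code S \<pi>) * w"
    unfolding w_def using assms lz_code_entries_le_power by (intro length_enc_nats_le) auto
  also have "\<dots> \<le> 4 * p * w"
    unfolding p_def using assms(2) length_lz_code_le by (intro mult_le_mono1) auto
  finally have "real (length (enc_nats (lz_code S \<pi>))) \<le> 4 * real p * real w"
    by (metis of_nat_mono of_nat_mult of_nat_numeral)
  also have "\<dots> \<le> 4 * real p * ((2 * real k + 5) * log 2 (length S))"
    unfolding w_def using binary_width_power_le_log[OF assms(2)] by (intro mult_left_mono) auto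
  finally show ?thesis by (simp add: p_def algebra_simps)
qed

theorem theorem16:
  "\<forall>k::nat. \<exists>(c::real) (dec :: bool list \<Rightarrow> nat list).
     \<forall>(S :: nat list) (\<pi> :: nat \<Rightarrow> nat).
       length S \<ge> 2 \<longrightarrow> (\<forall>x\<in>set S. x < length S ^ k) \<longrightarrow> order_preserving S \<pi> \<longrightarrow>
       (\<exists>b :: bool list. dec b = S \<and>
          real (length b) \<le> c * real (card (PDA_set S \<pi>)) * log 2 (real (length S)))"
proof -
  have "\<forall>S \<pi>. length S \<ge> 2 \<longrightarrow> (\<forall>x\<in>set S. x < length S ^ k) \<longrightarrow> order_preserving S \<pi> \<longrightarrow>
      (\<exists>b. lz_decode b = S \<and> real (length b)
         \<le> 4 * (2 * real k + 5) * real (card (PDA_set S \<pi>)) * log 2 (real (length S)))" for k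
    using lz_decode_enc_nats_lz_code length_enc_lz_code_le by blast
  then show ?thesis by blast
qed

end
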